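(* Let $q\ge1$ be an integer. Suppose there are constants $\varepsilon,\delta>0$ and a Borel set $K\subset[0,1)$ such that: (i) $e(q,x;\varepsilon,\delta)=1$ for $x\in K$ and $e(q,x;\varepsilon,\delta)\le2$ for $x\in[0,1)\setminus K$; (ii) if $(\mathbf{u},\mathbf{v})\in E(q,x;\varepsilon,\delta)$ for some $x\in[0,1)\setminus K$ with $\mathbf{u}\ne\mathbf{v}$, then both $x(\mathbf{u})\in K$ and $x(\mathbf{v})\in K$. Then $\sigma(q)\le\sqrt2$.
   Context: Standing setup: $b\ge2$ integer, $\mathcal{A}=\{0,\dots,b-1\}$, $\gamma\in(1/b,1)$, $\psi$ a $\mathbb{Z}$-periodic $C^1$ function. $S(x,\mathbf{i})=\sum_{n\ge1}\gamma^{n-1}\psi\big(\frac{x+i_1+i_2b+\cdots+i_nb^{n-1}}{b^n}\big)$, $S'=\partial_xS$. For $\mathbf{u}\in\mathcal{A}^q$, $x(\mathbf{u})=(x+u_1+u_2b+\cdots+u_qb^{q-1})/b^q$. Sequences $\mathbf{i},\mathbf{j}$ are $(\varepsilon,\delta)$-tangent at $x_0$ if $|S(x_0,\mathbf{i})-S(x_0,\mathbf{j})|\le\varepsilon$ and $|S'(x_0,\mathbf{i})-S'(x_0,\mathbf{j})|\le\delta$. $E(q,x_0;\varepsilon,\delta)$: pairs $(\mathbf{k},\mathbf{l})\in\mathcal{A}^q\times\mathcal{A}^q$ such that some concatenations $\mathbf{ku},\mathbf{lv}$ are $(\varepsilon,\delta)$-tangent at $x_0$; $e(q,x_0;\varepsilon,\delta)=\max_{\mathbf{k}}\#\{\mathbf{l}:(\mathbf{k},\mathbf{l})\in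 E(q,x_0;\varepsilon,\delta)\}$. Weight function: measurable $\omega:[0,1)\to(0,\infty)$ with $\omega,1/\omega$ bounded. Admissible testing function of order $q$: measurable $V:[0,1)\times\mathcal{A}^q\times\mathcal{A}^q\to[0,\infty)$ such that for some $\varepsilon,\delta>0$, $V(x,\mathbf{u},\mathbf{v})V(x,\mathbf{v},\mathbf{u})\ge1$ whenever $x\in[0,1)$ and $(\mathbf{u},\mathbf{v})\in E(q,x;\varepsilon,\delta)$. $\Sigma_{V,\omega}(x)=\sup_{\mathbf{u}}\frac{\omega(x)}{\omega(x(\mathbf{u}))}\sum_{\mathbf{v}}V(x,\mathbf{u},\mathbf{v})$; $\sigma(q)=\inf_{\omega,V}\|\Sigma_{V,\omega}\|_\infty$. *)

theory Defs
  imports "HOL-Analysis.Analysis" "HOL-Probability.Essential_Supremum"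
begin

text \<open>Digit sequences i = (i_1, i_2, ...) are encoded 0-based: i_n = i (n - 1).
  Finite words in A^q are lists of length q with entries < b: u_k = u ! (k - 1).\<close>

definition digit_seqs :: "nat \<Rightarrow> (nat \<Rightarrow> nat) set" where
  "digit_seqs b = {i. \<forall>n. i n < b}"

definition words :: "nat \<Rightarrow> nat \<Rightarrow> nat list set" where
  "words b q = {u. length u = q \<and> (\<forall>k<q. u ! k < b)}"

definition Sfun :: "nat \<Rightarrow> real \<Rightarrow> (real \<Rightarrow> real) \<Rightarrow> real \<Rightarrow> (nat \<Rightarrow> nat) \<Rightarrow> real" where
  "Sfun b \<gamma> \<psi> x i =
     (\<Sum>n. \<gamma> ^ n * \<psi> ((x + (\<Sum>k<Suc n. real (i k) * real b ^ k)) / real b ^ Suc n))"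

definition Sder :: "nat \<Rightarrow> real \<Rightarrow> (real \<Rightarrow> real) \<Rightarrow> real \<Rightarrow> (nat \<Rightarrow> nat) \<Rightarrow> real" where
  "Sder b \<gamma> \<psi> x i = deriv (\<lambda>y. Sfun b \<gamma> \<psi> y i) x"

definition xmap :: "nat \<Rightarrow> real \<Rightarrow> nat list \<Rightarrow> real" where
  "xmap b x u = (x + (\<Sum>k<length u. real (u ! k) * real b ^ k)) / real b ^ length u"

definition concat_seq :: "nat list \<Rightarrow> (nat \<Rightarrow> nat) \<Rightarrow> nat \<Rightarrow> nat" where
  "concat_seq k u = (\<lambda>n. if n < length k then k ! n else u (n - length k))"

definition tangent :: "nat \<Rightarrow> real \<Rightarrow> (real \<Rightarrow> real) \<Rightarrow> real \<Rightarrow> real \<Rightarrow> real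
    \<Rightarrow> (nat \<Rightarrow> nat) \<Rightarrow> (nat \<Rightarrow> nat) \<Rightarrow> bool" where
  "tangent b \<gamma> \<psi> \<epsilon> \<delta> x0 i j \<longleftrightarrow>
     \<bar>Sfun b \<gamma> \<psi> x0 i - Sfun b \<gamma> \<psi> x0 j\<bar> \<le> \<epsilon> \<and>
     \<bar>Sder b \<gamma> \<psi> x0 i - Sder b \<gamma> \<psi> x0 j\<bar> \<le> \<delta>"

definition Eset :: "nat \<Rightarrow> real \<Rightarrow> (real \<Rightarrow> real) \<Rightarrow> nat \<Rightarrow> real \<Rightarrow> real \<Rightarrow> real
    \<Rightarrow> (nat list \<times> nat list) set" where
  "Eset b \<gamma> \<psi> q x0 \<epsilon> \<delta> =
     {(k, l). k \<in> words b q \<and> l \<in> words b q \<and>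
        (\<exists>u\<in>digit_seqs b. \<exists>v\<in>digit_seqs b.
           tangent b \<gamma> \<psi> \<epsilon> \<delta> x0 (concat_seq k u) (concat_seq l v))}"

definition efun :: "nat \<Rightarrow> real \<Rightarrow> (real \<Rightarrow> real) \<Rightarrow> nat \<Rightarrow> real \<Rightarrow> real \<Rightarrow> real \<Rightarrow> nat" where
  "efun b \<gamma> \<psi> q x0 \<epsilon> \<delta> =
     Max ((\<lambda>k. card {l. (k, l) \<in> Eset b \<gamma> \<psi> q x0 \<epsilon> \<delta>}) ` words b q)"

definition weight_fun :: "(real \<Rightarrow> real) \<Rightarrow> bool" where
  "weight_fun \<omega> \<longleftrightarrow>
     \<omega> \<in> borel_measurable (restrict_space borel {0..<1}) \<and>
     (\<forall>x\<in>{0..<1}. \<omega> x > 0) \<and>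
     (\<exists>C. \<forall>x\<in>{0..<1}. \<omega> x \<le> C) \<and>
     (\<exists>C. \<forall>x\<in>{0..<1}. 1 / \<omega> x \<le> C)"

definition admissible_test :: "nat \<Rightarrow> real \<Rightarrow> (real \<Rightarrow> real) \<Rightarrow> nat
    \<Rightarrow> (real \<Rightarrow> nat list \<Rightarrow> nat list \<Rightarrow> real) \<Rightarrow> bool" where
  "admissible_test b \<gamma> \<psi> q V \<longleftrightarrow>
     (\<forall>u\<in>words b q. \<forall>v\<in>words b q.
        (\<lambda>x. V x u v) \<in> borel_measurable (restrict_space borel {0..<1}) \<and>
        (\<forall>x\<in>{0..<1}. V x u v \<ge> 0)) \<and>
     (\<exists>\<epsilon>>0. \<exists>\<delta>>0. \<forall>x\<in>{0..<1}. \<forall>u v. (u, v) \<in> Eset b \<gamma> \<psi> q x \<epsilon> \<delta> \<longrightarrow>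
        V x u v * V x v u \<ge> 1)"

definition SigmaVw :: "nat \<Rightarrow> nat \<Rightarrow> (real \<Rightarrow> nat list \<Rightarrow> nat list \<Rightarrow> real)
    \<Rightarrow> (real \<Rightarrow> real) \<Rightarrow> real \<Rightarrow> real" where
  "SigmaVw b q V \<omega> x =
     Max ((\<lambda>u. \<omega> x / \<omega> (xmap b x u) * (\<Sum>v\<in>words b q. V x u v)) ` words b q)"

definition sigma_q :: "nat \<Rightarrow> real \<Rightarrow> (real \<Rightarrow> real) \<Rightarrow> nat \<Rightarrow> ereal" where
  "sigma_q b \<gamma> \<psi> q =
     (INF p \<in> {(\<omega>, V). weight_fun \<omega> \<and> admissible_test b \<gamma> \<psi> q V}.
        esssup (restrict_space lborel {0..<1})
          (\<lambda>x. ereal (SigmaVw b q (snd p) (fst p) x)))"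

end

theory Submission
  imports Defs
begin

text \<open>Take the weight sqrt 2 on K and 1 elsewhere, and let the testing function be 1 on
  the diagonal and, at points outside K, on pairs of words that are strictly tangent there.
  At x in K only the diagonal contributes, so the weighted sum is at most
  sqrt 2 / omega(x(u)) \<le> sqrt 2. At x outside K a word u has at most one tangent partner
  besides itself, and if it has one then x(u) lies in K, so the sum is at most
  2 / sqrt 2 = sqrt 2. Strict tangency is an open condition in x because S and S' are
  continuous; this makes the testing function measurable, and admissibility holds with the
  halved constants.\<close>

lemma periodic_shift_int:
  fixes g :: "real \<Rightarrow> 'a"
  assumes per: "\<forall>x. g (x + 1) = g x"
  shows "g (x + of_int n) = g x"
proof (induction n rule: int_induct[where k = 0])
  case (step1 i)
  then show ?case using per[rule_format, of "x + of_int i"] by (simp add: add.assoc)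
next
  case (step2 i)
  then show ?case using per[rule_format, of "x + of_int (i - 1)"] by (simp add: add.assoc)
qed simp

lemma bounded_range_periodic:
  fixes g :: "real \<Rightarrow> real"
  assumes per: "\<forall>x. g (x + 1) = g x" and cont: "continuous_on {0..1} g"
  shows "bounded (range g)"
proof -
  have "g x \<in> g ` {0..1}" for x
  proof -
    have "frac x \<in> {0..1}" using frac_ge_0[of x] frac_lt_1[of x] by simp
    moreover have "g x = g (frac x)"
      using periodic_shift_int[OF per, of "frac x" "\<lfloor>x\<rfloor>"] by (simp add: frac_def)
    ultimately show ?thesis by (rule rev_image_eqI)
  qed
  then have "range g \<subseteq> g ` {0..1}" by blast
  moreover have "bounded (g ` {0..1})"
    by (rule compact_imp_bounded[OF compact_continuous_image[OF cont compact_Icc]])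
  ultimately show ?thesis by (rule bounded_subset[rotated])
qed

lemma deriv_periodic:
  fixes \<psi> :: "real \<Rightarrow> real"
  assumes per: "\<forall>x. \<psi> (x + 1) = \<psi> x" and diff: "\<psi> differentiable_on UNIV"
  shows "\<forall>x. deriv \<psi> (x + 1) = deriv \<psi> x"
proof
  fix x :: real
  have "DERIV \<psi> (x + 1) :> deriv \<psi> (x + 1)"
    using diff by (simp add: differentiable_on_def DERIV_deriv_iff_real_differentiable)
  then have "DERIV (\<lambda>y. \<psi> (y + 1)) x :> deriv \<psi> (x + 1)"
    by (rule DERIV_shift[THEN iffD1])
  moreover have "(\<lambda>y. \<psi> (y + 1)) = \<psi>" using per by auto
  ultimately show "deriv \<psi> (x + 1) = deriv \<psi> x" by (simp add: DERIV_imp_deriv)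
qed

lemma series_has_field_derivative_continuous:
  fixes f f' :: "nat \<Rightarrow> real \<Rightarrow> real" and a :: "nat \<Rightarrow> real"
  assumes deriv: "\<And>n x. (f n has_field_derivative f' n x) (at x)"
    and cont: "\<And>n. continuous_on UNIV (f' n)"
    and bound: "\<And>n x. \<bar>f' n x\<bar> \<le> a n" and summ: "summable a"
    and summ0: "summable (\<lambda>n. f n 0)"
  shows "((\<lambda>x. \<Sum>n. f n x) has_field_derivative (\<Sum>n. f' n x)) (at x)"
    and "continuous_on UNIV (\<lambda>x. \<Sum>n. f' n x)"
proof -
  have unif: "uniform_limit UNIV (\<lambda>n x. \<Sum>i<n. f' i x) (\<lambda>x. \<Sum>i. f' i x) sequentially"
    using bound by (intro Weierstrass_m_test[OF _ summ]) auto
  then have "uniformly_convergent_on UNIV (\<lambda>n x. \<Sum>i<n. f' i x)"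
    by (auto simp: uniformly_convergent_on_def)
  then show "((\<lambda>x. \<Sum>n. f n x) has_field_derivative (\<Sum>n. f' n x)) (at x)"
    using deriv summ0 by (intro has_field_derivative_series'(2)[OF convex_UNIV]) auto
  have "\<forall>\<^sub>F n in sequentially. continuous_on UNIV (\<lambda>x. \<Sum>i<n. f' i x)"
    by (intro always_eventually allI continuous_on_sum cont)
  then show "continuous_on UNIV (\<lambda>x. \<Sum>n. f' n x)"
    using uniform_limit_theorem[OF _ unif] by simp
qed

lemma abs_power_mult_divide_le:
  fixes \<gamma> y M B :: real
  assumes "\<bar>y\<bar> \<le> M" "1 \<le> B"
  shows "\<bar>\<gamma> ^ n * y / B\<bar> \<le> \<bar>\<gamma>\<bar> ^ n * M"
proof -
  have "0 \<le> M" using order_trans[OF abs_ge_zero assms(1)] .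
  then have "\<bar>y\<bar> \<le> M * B" using assms order_trans[OF _ mult_left_mono[OF assms(2)]] by simp
  then have "\<bar>y\<bar> / B \<le> M" using assms(2) by (intro mult_imp_div_pos_le) auto
  then have "\<bar>\<gamma>\<bar> ^ n * (\<bar>y\<bar> / B) \<le> \<bar>\<gamma>\<bar> ^ n * M" by (rule mult_left_mono) simp
  then show ?thesis using assms(2) by (simp add: abs_mult power_abs)
qed

definition tangency_zone :: "nat \<Rightarrow> real \<Rightarrow> (real \<Rightarrow> real) \<Rightarrow> real \<Rightarrow> real
    \<Rightarrow> nat list \<Rightarrow> nat list \<Rightarrow> real set" where
  "tangency_zone b \<gamma> \<psi> \<epsilon> \<delta> u v =
     {x. \<exists>i\<in>digit_seqs b. \<exists>j\<in>digit_seqs b.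
        \<bar>Sfun b \<gamma> \<psi> x (concat_seq u i) - Sfun b \<gamma> \<psi> x (concat_seq v j)\<bar> < \<epsilon> \<and>
        \<bar>Sder b \<gamma> \<psi> x (concat_seq u i) - Sder b \<gamma> \<psi> x (concat_seq v j)\<bar> < \<delta>}"

definition sqrt2_weight :: "real set \<Rightarrow> real \<Rightarrow> real" where
  "sqrt2_weight K x = (if x \<in> K then sqrt 2 else 1)"

definition tangency_test :: "nat \<Rightarrow> real \<Rightarrow> (real \<Rightarrow> real) \<Rightarrow> real \<Rightarrow> real \<Rightarrow> real set
    \<Rightarrow> real \<Rightarrow> nat list \<Rightarrow> nat list \<Rightarrow> real" where
  "tangency_test b \<gamma> \<psi> \<epsilon> \<delta> K x u v =
     (if u = v \<or> (x \<notin> K \<and> x \<in> tangency_zone b \<gamma> \<psi> \<epsilon> \<delta> u v) then 1 else 0)"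

lemma tangency_zone_commute:
  "tangency_zone b \<gamma> \<psi> \<epsilon> \<delta> u v = tangency_zone b \<gamma> \<psi> \<epsilon> \<delta> v u"
  unfolding tangency_zone_def by (auto simp: abs_minus_commute)

lemma finite_words: "finite (words b q)"
proof (rule finite_subset)
  show "words b q \<subseteq> {xs. set xs \<subseteq> {..<b} \<and> length xs = q}"
    unfolding words_def by (auto simp: in_set_conv_nth)
qed (simp add: finite_lists_length_eq)

lemma words_nonempty: "b \<ge> 1 \<Longrightarrow> words b q \<noteq> {}"
  unfolding words_def by (intro ex_in_conv[THEN iffD1] exI[of _ "replicate q 0"]) auto

lemma Eset_imp_words: "(u, v) \<in> Eset b \<gamma> \<psi> q x \<epsilon> \<delta> \<Longrightarrow> u \<in> words b q \<and> v \<in> words b q"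
  unfolding Eset_def by auto

lemma Eset_mono: "\<epsilon> \<le> \<epsilon>' \<Longrightarrow> \<delta> \<le> \<delta>' \<Longrightarrow> Eset b \<gamma> \<psi> q x \<epsilon> \<delta> \<subseteq> Eset b \<gamma> \<psi> q x \<epsilon>' \<delta>'"
  by (clarsimp simp: Eset_def tangent_def) (meson order_trans)

lemma diagonal_in_Eset:
  assumes "b \<ge> 1" "0 \<le> \<epsilon>" "0 \<le> \<delta>" "u \<in> words b q"
  shows "(u, u) \<in> Eset b \<gamma> \<psi> q x \<epsilon> \<delta>"
proof -
  have "(\<lambda>n. 0) \<in> digit_seqs b" using assms(1) by (simp add: digit_seqs_def)
  moreover have "tangent b \<gamma> \<psi> \<epsilon> \<delta> x (concat_seq u (\<lambda>n. 0)) (concat_seq u (\<lambda>n. 0))"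
    using assms(2,3) by (simp add: tangent_def)
  ultimately show ?thesis using assms(4) unfolding Eset_def by blast
qed

lemma Eset_if_tangency_zone:
  "x \<in> tangency_zone b \<gamma> \<psi> \<epsilon> \<delta> u v \<Longrightarrow> u \<in> words b q \<Longrightarrow> v \<in> words b q
    \<Longrightarrow> (u, v) \<in> Eset b \<gamma> \<psi> q x \<epsilon> \<delta>"
  unfolding tangency_zone_def Eset_def tangent_def by (auto intro: less_imp_le)

lemma tangency_zone_if_Eset:
  "(u, v) \<in> Eset b \<gamma> \<psi> q x \<epsilon> \<delta> \<Longrightarrow> \<epsilon> < \<epsilon>' \<Longrightarrow> \<delta> < \<delta>'
    \<Longrightarrow> x \<in> tangency_zone b \<gamma> \<psi> \<epsilon>' \<delta>' u v"
  by (clarsimp simp: tangency_zone_def Eset_def tangent_def) (meson le_less_trans)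

lemma card_Eset_row_le_efun:
  "u \<in> words b q \<Longrightarrow> card {l. (u, l) \<in> Eset b \<gamma> \<psi> q x \<epsilon> \<delta>} \<le> efun b \<gamma> \<psi> q x \<epsilon> \<delta>"
  unfolding efun_def by (intro Max_ge finite_imageI finite_words imageI)

lemma finite_Eset_row: "finite {l. (u, l) \<in> Eset b \<gamma> \<psi> q x \<epsilon> \<delta>}"
  by (rule finite_subset[OF _ finite_words[of b q]]) (auto dest: Eset_imp_words)

lemma Eset_diagonal_if_efun_le_1:
  assumes "efun b \<gamma> \<psi> q x \<epsilon> \<delta> \<le> 1" "b \<ge> 1" "0 \<le> \<epsilon>" "0 \<le> \<delta>"
    and uv: "(u, v) \<in> Eset b \<gamma> \<psi> q x \<epsilon> \<delta>"
  shows "u = v"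
proof (rule ccontr)
  assume "u \<noteq> v"
  have u: "u \<in> words b q" using Eset_imp_words[OF uv] by simp
  have "{u, v} \<subseteq> {l. (u, l) \<in> Eset b \<gamma> \<psi> q x \<epsilon> \<delta>}"
    using diagonal_in_Eset[OF assms(2-4) u] uv by auto
  then have "card {u, v} \<le> card {l. (u, l) \<in> Eset b \<gamma> \<psi> q x \<epsilon> \<delta>}"
    by (rule card_mono[OF finite_Eset_row])
  also have "\<dots> \<le> 1" using card_Eset_row_le_efun[OF u] assms(1) by (rule order_trans)
  finally show False using \<open>u \<noteq> v\<close> by simp
qed

lemma borel_measurable_sqrt2_weight:
  assumes [measurable]: "K \<in> sets borel"
  shows "sqrt2_weight K \<in> borel_measurable borel"
  unfolding sqrt2_weight_def by measurable

lemma weight_fun_sqrt2_weight: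
  assumes "K \<in> sets borel"
  shows "weight_fun (sqrt2_weight K)"
proof -
  have "\<forall>x. 0 < sqrt2_weight K x \<and> sqrt2_weight K x \<le> sqrt 2 \<and> 1 / sqrt2_weight K x \<le> 1"
    by (simp add: sqrt2_weight_def)
  then show ?thesis
    unfolding weight_fun_def
    using measurable_restrict_space1[OF borel_measurable_sqrt2_weight[OF assms]] by blast
qed

lemma sum_tangency_test:
  "(\<Sum>v\<in>words b q. tangency_test b \<gamma> \<psi> \<epsilon> \<delta> K x u v) =
     card {v\<in>words b q. u = v \<or> (x \<notin> K \<and> x \<in> tangency_zone b \<gamma> \<psi> \<epsilon> \<delta> u v)}"
  unfolding tangency_test_def using sum.inter_filter[OF finite_words, of "\<lambda>_. 1::real"] by simp

context
  fixes b :: nat and \<gamma> :: real and \<psi> :: "real \<Rightarrow> real"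
  assumes \<gamma>: "\<bar>\<gamma>\<bar> < 1"
    and per: "\<forall>x. \<psi> (x + 1) = \<psi> x"
    and diff: "\<psi> differentiable_on UNIV" and cont': "continuous_on UNIV (deriv \<psi>)"
begin

lemma rescaled_series_has_derivative:
  fixes c B :: "nat \<Rightarrow> real"
  assumes B: "\<And>n. B n \<ge> 1"
  shows "((\<lambda>x. \<Sum>n. \<gamma> ^ n * \<psi> ((x + c n) / B n)) has_field_derivative
           (\<Sum>n. \<gamma> ^ n * deriv \<psi> ((x + c n) / B n) / B n)) (at x)"
    and "continuous_on UNIV (\<lambda>x. \<Sum>n. \<gamma> ^ n * deriv \<psi> ((x + c n) / B n) / B n)"
proof -
  have [simp]: "B n \<noteq> 0" for n using B[of n] by auto
  obtain M0 where M0: "\<And>x. \<bar>\<psi> x\<bar> \<le> M0"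
    using bounded_range_periodic[OF per
        continuous_on_subset[OF differentiable_imp_continuous_on[OF diff]]]
    by (auto simp: bounded_iff)
  obtain M1 where M1: "\<And>x. \<bar>deriv \<psi> x\<bar> \<le> M1"
    using bounded_range_periodic[OF deriv_periodic[OF per diff] continuous_on_subset[OF cont']]
    by (auto simp: bounded_iff)
  have deriv: "((\<lambda>x. \<gamma> ^ n * \<psi> ((x + c n) / B n)) has_field_derivative
      \<gamma> ^ n * deriv \<psi> ((x + c n) / B n) / B n) (at x)" for n x
  proof -
    have "DERIV \<psi> y :> deriv \<psi> y" for y
      using diff by (simp add: differentiable_on_def DERIV_deriv_iff_real_differentiable)
    moreover have "((\<lambda>x. (x + c n) / B n) has_field_derivative 1 / B n) (at x)"
      by (auto intro!: derivative_eq_intros)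
    ultimately have "((\<lambda>x. \<gamma> ^ n * \<psi> ((x + c n) / B n)) has_field_derivative
        \<gamma> ^ n * (deriv \<psi> ((x + c n) / B n) * (1 / B n))) (at x)"
      by (rule DERIV_cmult[OF DERIV_chain2])
    then show ?thesis by simp
  qed
  have cont: "continuous_on UNIV (\<lambda>x. \<gamma> ^ n * deriv \<psi> ((x + c n) / B n) / B n)" for n
  proof -
    have "continuous_on UNIV (\<lambda>x. deriv \<psi> ((x + c n) / B n))"
      by (rule continuous_on_compose2[OF cont']) (auto intro!: continuous_intros)
    then show ?thesis by (auto intro!: continuous_intros)
  qed
  have bound: "\<bar>\<gamma> ^ n * deriv \<psi> ((x + c n) / B n) / B n\<bar> \<le> \<bar>\<gamma>\<bar> ^ n * M1" for n x
    using M1 B by (rule abs_power_mult_divide_le)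
  have geometric: "summable (\<lambda>n. \<bar>\<gamma>\<bar> ^ n * M)" for M
    using \<gamma> by (intro summable_mult2) (simp add: summable_geometric)
  have "summable (\<lambda>n. \<gamma> ^ n * \<psi> ((0 + c n) / B n))"
  proof (rule summable_comparison_test'[OF geometric])
    show "norm (\<gamma> ^ n * \<psi> ((0 + c n) / B n)) \<le> \<bar>\<gamma>\<bar> ^ n * M0" for n
      using abs_power_mult_divide_le[OF M0 order_refl, of \<gamma> n] by simp
  qed
  note series = series_has_field_derivative_continuous[
      where f = "\<lambda>n x. \<gamma> ^ n * \<psi> ((x + c n) / B n)"
        and f' = "\<lambda>n x. \<gamma> ^ n * deriv \<psi> ((x + c n) / B n) / B n",
      OF deriv cont bound geometric this]
  show "((\<lambda>x. \<Sum>n. \<gamma> ^ n * \<psi> ((x + c n) / B n)) has_field_derivative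
           (\<Sum>n. \<gamma> ^ n * deriv \<psi> ((x + c n) / B n) / B n)) (at x)"
    by (rule series(1))
  show "continuous_on UNIV (\<lambda>x. \<Sum>n. \<gamma> ^ n * deriv \<psi> ((x + c n) / B n) / B n)"
    by (rule series(2))
qed

lemma continuous_on_Sfun_Sder:
  assumes b: "b \<ge> 1"
  shows "continuous_on UNIV (\<lambda>x. Sfun b \<gamma> \<psi> x i) \<and> continuous_on UNIV (\<lambda>x. Sder b \<gamma> \<psi> x i)"
proof -
  define B where "B n = real b ^ Suc n" for n
  define c where "c n = (\<Sum>k<Suc n. real (i k) * real b ^ k)" for n
  have "B n \<ge> 1" for n unfolding B_def using b by (intro one_le_power) simp
  note series = rescaled_series_has_derivative[of B c, OF this]
  have S: "(\<lambda>x. Sfun b \<gamma> \<psi> x i) = (\<lambda>x. \<Sum>n. \<gamma> ^ n * \<psi> ((x + c n) / B n))"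
    unfolding Sfun_def B_def c_def ..
  have "(\<lambda>x. Sder b \<gamma> \<psi> x i) = (\<lambda>x. \<Sum>n. \<gamma> ^ n * deriv \<psi> ((x + c n) / B n) / B n)"
    unfolding Sder_def S using series(1) by (intro ext DERIV_imp_deriv)
  moreover have "continuous_on UNIV (\<lambda>x. Sfun b \<gamma> \<psi> x i)"
    unfolding S using series(1) by (intro continuous_at_imp_continuous_on ballI DERIV_isCont)
  ultimately show ?thesis using series(2) by (simp only:)
qed

lemma open_tangency_zone:
  assumes "b \<ge> 1"
  shows "open (tangency_zone b \<gamma> \<psi> \<epsilon> \<delta> u v)"
proof -
  have "tangency_zone b \<gamma> \<psi> \<epsilon> \<delta> u v = (\<Union>i\<in>digit_seqs b. \<Union>j\<in>digit_seqs b.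
      {x. \<bar>Sfun b \<gamma> \<psi> x (concat_seq u i) - Sfun b \<gamma> \<psi> x (concat_seq v j)\<bar> < \<epsilon>} \<inter>
      {x. \<bar>Sder b \<gamma> \<psi> x (concat_seq u i) - Sder b \<gamma> \<psi> x (concat_seq v j)\<bar> < \<delta>})"
    unfolding tangency_zone_def by auto
  moreover have "open ({x. \<bar>Sfun b \<gamma> \<psi> x (concat_seq u i) - Sfun b \<gamma> \<psi> x (concat_seq v j)\<bar> < \<epsilon>} \<inter>
      {x. \<bar>Sder b \<gamma> \<psi> x (concat_seq u i) - Sder b \<gamma> \<psi> x (concat_seq v j)\<bar> < \<delta>})" for i j
    using continuous_on_Sfun_Sder[OF assms] by (intro open_Int open_Collect_less continuous_intros) auto
  ultimately show ?thesis by (auto intro!: open_UN)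
qed

lemma borel_measurable_tangency_test:
  assumes "b \<ge> 1" "K \<in> sets borel"
  shows "(\<lambda>x. tangency_test b \<gamma> \<psi> \<epsilon> \<delta> K x u v) \<in> borel_measurable borel"
proof -
  have [measurable]: "K \<in> sets borel" "tangency_zone b \<gamma> \<psi> \<epsilon> \<delta> u v \<in> sets borel"
    using assms open_tangency_zone[OF assms(1)] by auto
  show ?thesis unfolding tangency_test_def by measurable
qed

lemma admissible_tangency_test:
  assumes b: "b \<ge> 1" and \<epsilon>: "\<epsilon> > 0" and \<delta>: "\<delta> > 0" and K_borel: "K \<in> sets borel"
    and K: "\<forall>x\<in>K. efun b \<gamma> \<psi> q x \<epsilon> \<delta> \<le> 1"
  shows "admissible_test b \<gamma> \<psi> q (tangency_test b \<gamma> \<psi> \<epsilon> \<delta> K)"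
proof -
  have "1 \<le> tangency_test b \<gamma> \<psi> \<epsilon> \<delta> K x u v * tangency_test b \<gamma> \<psi> \<epsilon> \<delta> K x v u"
    if uv: "(u, v) \<in> Eset b \<gamma> \<psi> q x (\<epsilon>/2) (\<delta>/2)" for x u v
  proof (cases "u = v")
    case False
    have "Eset b \<gamma> \<psi> q x (\<epsilon>/2) (\<delta>/2) \<subseteq> Eset b \<gamma> \<psi> q x \<epsilon> \<delta>"
      using \<epsilon> \<delta> by (intro Eset_mono) auto
    with uv have "(u, v) \<in> Eset b \<gamma> \<psi> q x \<epsilon> \<delta>" by blast
    then have "x \<notin> K"
      using Eset_diagonal_if_efun_le_1[OF _ b less_imp_le[OF \<epsilon>] less_imp_le[OF \<delta>]]
        K False by blast
    moreover have "x \<in> tangency_zone b \<gamma> \<psi> \<epsilon> \<delta> u v"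
      using tangency_zone_if_Eset[OF uv] \<epsilon> \<delta> by simp
    ultimately show ?thesis
      by (simp add: tangency_test_def tangency_zone_commute[of _ _ _ _ _ v u])
  qed (simp add: tangency_test_def)
  moreover have "\<epsilon>/2 > 0" "\<delta>/2 > 0" using \<epsilon> \<delta> by auto
  moreover have "(\<lambda>x. tangency_test b \<gamma> \<psi> \<epsilon> \<delta> K x u v)
      \<in> borel_measurable (restrict_space borel {0..<1})" for u v
    by (rule measurable_restrict_space1[OF borel_measurable_tangency_test[OF b K_borel]])
  moreover have "0 \<le> tangency_test b \<gamma> \<psi> \<epsilon> \<delta> K x u v" for x u v
    by (simp add: tangency_test_def)
  ultimately show ?thesis unfolding admissible_test_def by blast
qed

end

lemma tangency_test_term_le_sqrt2:
  assumes "b \<ge> 1" "0 \<le> \<epsilon>" "0 \<le> \<delta>" and u: "u \<in> words b q"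
    and efun2: "x \<notin> K \<Longrightarrow> efun b \<gamma> \<psi> q x \<epsilon> \<delta> \<le> 2"
    and image: "\<And>v. x \<notin> K \<Longrightarrow> (u, v) \<in> Eset b \<gamma> \<psi> q x \<epsilon> \<delta> \<Longrightarrow> u \<noteq> v \<Longrightarrow> xmap b x u \<in> K"
  shows "sqrt2_weight K x / sqrt2_weight K (xmap b x u) *
      (\<Sum>v\<in>words b q. tangency_test b \<gamma> \<psi> \<epsilon> \<delta> K x u v) \<le> sqrt 2"
proof -
  define R where "R = {v\<in>words b q. u = v \<or> (x \<notin> K \<and> x \<in> tangency_zone b \<gamma> \<psi> \<epsilon> \<delta> u v)}"
  have sum: "(\<Sum>v\<in>words b q. tangency_test b \<gamma> \<psi> \<epsilon> \<delta> K x u v) = card R"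
    unfolding R_def by (rule sum_tangency_test)
  have weight_ge: "sqrt2_weight K y \<ge> 1" for y by (simp add: sqrt2_weight_def)
  show ?thesis
  proof (cases "x \<notin> K \<and> (\<exists>v\<in>R. v \<noteq> u)")
    case True
    then obtain v where "x \<notin> K" "v \<in> R" "v \<noteq> u" by blast
    then have "(u, v) \<in> Eset b \<gamma> \<psi> q x \<epsilon> \<delta>" by (auto simp: R_def intro: Eset_if_tangency_zone u)
    then have "xmap b x u \<in> K" using image \<open>x \<notin> K\<close> \<open>v \<noteq> u\<close> by auto
    have "R \<subseteq> {l. (u, l) \<in> Eset b \<gamma> \<psi> q x \<epsilon> \<delta>}"
      using diagonal_in_Eset[OF assms(1-3) u] by (auto simp: R_def intro: Eset_if_tangency_zone u)
    then have "card R \<le> card {l. (u, l) \<in> Eset b \<gamma> \<psi> q x \<epsilon> \<delta>}"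
      by (rule card_mono[OF finite_Eset_row])
    also have "\<dots> \<le> 2"
      using card_Eset_row_le_efun[OF u] efun2[OF \<open>x \<notin> K\<close>] by (rule order_trans)
    finally have "card R / sqrt 2 \<le> 2 / sqrt 2" by (simp add: divide_right_mono)
    also have "\<dots> = sqrt 2" by (simp add: real_div_sqrt)
    also have "card R / sqrt 2 = sqrt2_weight K x / sqrt2_weight K (xmap b x u) *
        (\<Sum>v\<in>words b q. tangency_test b \<gamma> \<psi> \<epsilon> \<delta> K x u v)"
      using \<open>x \<notin> K\<close> \<open>xmap b x u \<in> K\<close> by (simp add: sum sqrt2_weight_def)
    finally show ?thesis .
  next
    case False
    then have "R = {u}" using u by (auto simp: R_def)
    then have "sqrt2_weight K x / sqrt2_weight K (xmap b x u) *
        (\<Sum>v\<in>words b q. tangency_test b \<gamma> \<psi> \<epsilon> \<delta> K x u v) =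
        sqrt2_weight K x / sqrt2_weight K (xmap b x u)"
      by (simp add: sum)
    also have "\<dots> \<le> sqrt2_weight K x"
      using mult_left_mono[of 1 "sqrt2_weight K (xmap b x u)" "sqrt2_weight K x"]
        weight_ge[of x] weight_ge[of "xmap b x u"]
      by (intro mult_imp_div_pos_le) auto
    also have "\<dots> \<le> sqrt 2" by (simp add: sqrt2_weight_def)
    finally show ?thesis .
  qed
qed

lemma SigmaVw_le:
  assumes "b \<ge> 1"
    and "\<And>u. u \<in> words b q \<Longrightarrow> \<omega> x / \<omega> (xmap b x u) * (\<Sum>v\<in>words b q. V x u v) \<le> c"
  shows "SigmaVw b q V \<omega> x \<le> c"
  unfolding SigmaVw_def using assms finite_words words_nonempty by auto

lemma sigma_q_le:
  assumes "weight_fun \<omega>" "admissible_test b \<gamma> \<psi> q V"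
    and [measurable]: "\<omega> \<in> borel_measurable borel"
    and V_meas [measurable]: "\<And>u v. (\<lambda>x. V x u v) \<in> borel_measurable borel"
    and bound: "\<And>x. x \<in> {0..<1} \<Longrightarrow> SigmaVw b q V \<omega> x \<le> c"
  shows "sigma_q b \<gamma> \<psi> q \<le> ereal c"
proof -
  have "(\<lambda>x. SigmaVw b q V \<omega> x) \<in> borel_measurable borel"
    unfolding SigmaVw_def xmap_def by (intro borel_measurable_Max[OF finite_words]) measurable
  then have "esssup (restrict_space lborel {0..<1}) (\<lambda>x. ereal (SigmaVw b q V \<omega> x)) \<le> ereal c"
    using bound by (intro esssup_I measurable_restrict_space1) auto
  then show ?thesis
    unfolding sigma_q_def using assms(1,2) by (intro INF_lower2[of "(\<omega>, V)"]) auto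
qed

theorem lemma2p10:
  fixes b :: nat and \<gamma> :: real and \<psi> :: "real \<Rightarrow> real" and q :: nat
    and \<epsilon> \<delta> :: real and K :: "real set"
  assumes hb: "b \<ge> 2"
    and h\<gamma>: "1 / real b < \<gamma>" "\<gamma> < 1"
    and h\<psi>per: "\<forall>x. \<psi> (x + 1) = \<psi> x"
    and h\<psi>C1: "\<psi> differentiable_on UNIV" "continuous_on UNIV (deriv \<psi>)"
    and hq: "q \<ge> 1"
    and h\<epsilon>: "\<epsilon> > 0" and h\<delta>: "\<delta> > 0"
    and hK: "K \<in> sets borel" "K \<subseteq> {0..<1}"
    and h1: "\<forall>x\<in>K. efun b \<gamma> \<psi> q x \<epsilon> \<delta> = 1"
    and h2: "\<forall>x\<in>{0..<1} - K. efun b \<gamma> \<psi> q x \<epsilon> \<delta> \<le> 2"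
    and h3: "\<forall>x\<in>{0..<1} - K. \<forall>u v. (u, v) \<in> Eset b \<gamma> \<psi> q x \<epsilon> \<delta> \<and> u \<noteq> v \<longrightarrow>
               xmap b x u \<in> K \<and> xmap b x v \<in> K"
  shows "sigma_q b \<gamma> \<psi> q \<le> ereal (sqrt 2)"
proof (rule sigma_q_le)
  have b: "b \<ge> 1" using hb by simp
  have "0 < 1 / real b" using hb by simp
  then have \<gamma>: "\<bar>\<gamma>\<bar> < 1" using h\<gamma> by linarith
  show "weight_fun (sqrt2_weight K)" "sqrt2_weight K \<in> borel_measurable borel"
    using hK(1) by (simp_all add: weight_fun_sqrt2_weight borel_measurable_sqrt2_weight)
  show "admissible_test b \<gamma> \<psi> q (tangency_test b \<gamma> \<psi> \<epsilon> \<delta> K)"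
    using admissible_tangency_test[OF \<gamma> h\<psi>per h\<psi>C1 b h\<epsilon> h\<delta> hK(1)] h1 by simp
  show "(\<lambda>x. tangency_test b \<gamma> \<psi> \<epsilon> \<delta> K x u v) \<in> borel_measurable borel" for u v
    using borel_measurable_tangency_test[OF \<gamma> h\<psi>per h\<psi>C1 b hK(1)] .
  show "SigmaVw b q (tangency_test b \<gamma> \<psi> \<epsilon> \<delta> K) (sqrt2_weight K) x \<le> sqrt 2"
    if "x \<in> {0..<1}" for x
  proof (rule SigmaVw_le[OF b])
    fix u assume u: "u \<in> words b q"
    have "x \<notin> K \<Longrightarrow> efun b \<gamma> \<psi> q x \<epsilon> \<delta> \<le> 2" using h2 that by blast
    moreover have "xmap b x u \<in> K"
      if "x \<notin> K" "(u, v) \<in> Eset b \<gamma> \<psi> q x \<epsilon> \<delta>" "u \<noteq> v" for v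
      using h3 \<open>x \<in> {0..<1}\<close> that by blast
    ultimately show "sqrt2_weight K x / sqrt2_weight K (xmap b x u) *
        (\<Sum>v\<in>words b q. tangency_test b \<gamma> \<psi> \<epsilon> \<delta> K x u v) \<le> sqrt 2"
      by (rule tangency_test_term_le_sqrt2[OF b less_imp_le[OF h\<epsilon>] less_imp_le[OF h\<delta>] u])
  qed
qed

end
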